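(* In the bipartite setting, for all $\alpha,\gamma\in\Phi_{\ge-1}$ we have $\tau_t(t_-\alpha)=t_-\tau_-\tau_+(\alpha)$ and $(\alpha||\gamma)_{\ge-1}=(t_-\alpha||t_-\gamma)_t$.
   Context: $I$ is a connected finite type Dynkin diagram with root system $\Phi$, positive roots $\Phi_+$, simple roots $\alpha_i$, Weyl group with simple reflections $s_i$. Let $I=I_+\sqcup I_-$ be the bipartition of $I$ (every edge joins $I_+$ and $I_-$), $t_\pm:=\prod_{i\in I_\pm}s_i$, $t:=t_+t_-$. $[\gamma;\alpha_i]$ is the coefficient of $\alpha_i$ in $\gamma$ in the simple root basis, $[x]_+=\max\{x,0\}$. $\Phi_{\ge-1}:=\Phi_+\cup\{-\alpha_i\}_{i\in I}$; for $\varepsilon\in\{+,-\}$ the involution $\tau_\varepsilon$ of $\Phi_{\ge-1}$ is $\tau_\varepsilon(-\alpha_i)=-\alpha_i$ if $i\in I_{-\varepsilon}$ and $\tau_\varepsilon(\alpha)=t_\varepsilon\alpha$ otherwise. $(\bullet||\bullet)_{\ge-1}$ is the unique function on $\Phi_{\ge-1}^2$ invariant under $\tau_+$ and $\tau_-$ with $(-\alpha_i||\gamma)_{\ge-1}=[\gamma;\alpha_i]_+$. For a Coxeter element $c=s_{i_1}\cdots s_{i_n}$ put $\beta^c_{i_k}:=s_{i_n}\cdots s_{i_{k+1}}\alpha_{i_k}$, $\Phi_{\mathrm{ap}}(c):=\Phi_+\cup\{-\beta^c_i\}_{i\in I}$; $\tau_c$ on $\Phi_{\mathrm{ap}}(c)$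 is $\tau_c(\beta_i^c)=-\beta_i^c$, $\tau_c(\alpha)=c\alpha$ otherwise; $(\bullet||\bullet)_c$ is the unique $\tau_c$-invariant function on $\Phi_{\mathrm{ap}}(c)^2$ with $(-\beta_i^c||\alpha)_c=[\alpha;\alpha_i]_+$. The linear map $t_-$ maps $\Phi_{\ge-1}$ bijectively onto $\Phi_{\mathrm{ap}}(t)$. *)

theory Defs
  imports Complex_Main
begin

(* Root lattice vectors: coordinates in the basis of simple roots, indexed by the
   vertex set I = UNIV of a finite type 'i. Cartan matrix convention:
   s_i(alpha_j) = alpha_j - A i j * alpha_i. *)

type_synonym 'i vec = "'i \<Rightarrow> int"

definition simple :: "'i \<Rightarrow> 'i vec" where
  "simple i = (\<lambda>j. if j = i then 1 else 0)"

definition neg :: "'i vec \<Rightarrow> 'i vec" where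
  "neg v = (\<lambda>j. - v j)"

definition srefl :: "('i::finite \<Rightarrow> 'i \<Rightarrow> int) \<Rightarrow> 'i \<Rightarrow> 'i vec \<Rightarrow> 'i vec" where
  "srefl A i v = (\<lambda>j. if j = i then v i - (\<Sum>k\<in>UNIV. A i k * v k) else v j)"

fun refl_word :: "('i::finite \<Rightarrow> 'i \<Rightarrow> int) \<Rightarrow> 'i list \<Rightarrow> 'i vec \<Rightarrow> 'i vec" where
  "refl_word A [] = id"
| "refl_word A (i # w) = srefl A i \<circ> refl_word A w"

definition finite_type_cartan :: "('i::finite \<Rightarrow> 'i \<Rightarrow> int) \<Rightarrow> bool" where
  "finite_type_cartan A \<longleftrightarrow>
     (\<forall>i. A i i = 2) \<and> (\<forall>i j. i \<noteq> j \<longrightarrow> A i j \<le> 0) \<and> (\<forall>i j. A i j = 0 \<longleftrightarrow> A j i = 0) \<and>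
     (\<exists>d :: 'i \<Rightarrow> real. (\<forall>i. d i > 0) \<and> (\<forall>i j. d i * of_int (A i j) = d j * of_int (A j i)) \<and>
        (\<forall>x :: 'i \<Rightarrow> real. (\<exists>i. x i \<noteq> 0) \<longrightarrow>
            (\<Sum>i\<in>UNIV. \<Sum>j\<in>UNIV. x i * d i * of_int (A i j) * x j) > 0))"

definition dynkin_edges :: "('i \<Rightarrow> 'i \<Rightarrow> int) \<Rightarrow> ('i \<times> 'i) set" where
  "dynkin_edges A = {(i, j). i \<noteq> j \<and> A i j \<noteq> 0}"

definition connected_diagram :: "('i \<Rightarrow> 'i \<Rightarrow> int) \<Rightarrow> bool" where
  "connected_diagram A \<longleftrightarrow> (\<forall>i j. (i, j) \<in> (dynkin_edges A)\<^sup>*)"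

definition is_bipartition :: "('i \<Rightarrow> 'i \<Rightarrow> int) \<Rightarrow> 'i set \<Rightarrow> 'i set \<Rightarrow> bool" where
  "is_bipartition A Ipl Imi \<longleftrightarrow> Ipl \<inter> Imi = {} \<and> Ipl \<union> Imi = UNIV \<and>
     (\<forall>i j. (i, j) \<in> dynkin_edges A \<longrightarrow> (i \<in> Ipl \<longleftrightarrow> j \<in> Imi))"

inductive_set roots :: "('i::finite \<Rightarrow> 'i \<Rightarrow> int) \<Rightarrow> 'i vec set" for A where
  simple_root: "simple i \<in> roots A"
| refl_root: "v \<in> roots A \<Longrightarrow> srefl A i v \<in> roots A"

definition pos_roots :: "('i::finite \<Rightarrow> 'i \<Rightarrow> int) \<Rightarrow> 'i vec set" where
  "pos_roots A = {v \<in> roots A. \<forall>j. v j \<ge> 0}"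

definition almost_pos :: "('i::finite \<Rightarrow> 'i \<Rightarrow> int) \<Rightarrow> 'i vec set" where
  "almost_pos A = pos_roots A \<union> range (\<lambda>i. neg (simple i))"

(* tau_eps: Ie = I_eps enumerated by the list we (so refl_word A we = t_eps),
   Io = I_{-eps} *)
definition tau_bip :: "('i::finite \<Rightarrow> 'i \<Rightarrow> int) \<Rightarrow> 'i set \<Rightarrow> 'i list \<Rightarrow> 'i vec \<Rightarrow> 'i vec" where
  "tau_bip A Io we v = (if \<exists>i\<in>Io. v = neg (simple i) then v else refl_word A we v)"

(* beta^c_{i_k} = s_{i_n} ... s_{i_{k+1}} alpha_{i_k} for c = s_{i_1} ... s_{i_n} *)
fun beta :: "('i::finite \<Rightarrow> 'i \<Rightarrow> int) \<Rightarrow> 'i list \<Rightarrow> 'i \<Rightarrow> 'i vec" where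
  "beta A [] i = simple i"
| "beta A (j # w) i = (if j = i then refl_word A (rev w) (simple i) else beta A w i)"

definition ap_roots :: "('i::finite \<Rightarrow> 'i \<Rightarrow> int) \<Rightarrow> 'i list \<Rightarrow> 'i vec set" where
  "ap_roots A w = pos_roots A \<union> range (\<lambda>i. neg (beta A w i))"

definition tau_c :: "('i::finite \<Rightarrow> 'i \<Rightarrow> int) \<Rightarrow> 'i list \<Rightarrow> 'i vec \<Rightarrow> 'i vec" where
  "tau_c A w v = (if \<exists>i. v = beta A w i then neg v else refl_word A w v)"

(* f satisfies the characterization of ( || )_{>= -1} *)
definition is_compat_ge ::
  "('i::finite \<Rightarrow> 'i \<Rightarrow> int) \<Rightarrow> 'i set \<Rightarrow> 'i set \<Rightarrow> 'i list \<Rightarrow> 'i list \<Rightarrow> ('i vec \<Rightarrow> 'i vec \<Rightarrow> int) \<Rightarrow> bool" where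
  "is_compat_ge A Ipl Imi wp wm f \<longleftrightarrow>
     (\<forall>a\<in>almost_pos A. \<forall>g\<in>almost_pos A.
        f (tau_bip A Imi wp a) (tau_bip A Imi wp g) = f a g \<and>
        f (tau_bip A Ipl wm a) (tau_bip A Ipl wm g) = f a g) \<and>
     (\<forall>i. \<forall>g\<in>almost_pos A. f (neg (simple i)) g = max (g i) 0)"

(* g satisfies the characterization of ( || )_c, c given by the word w *)
definition is_compat_c ::
  "('i::finite \<Rightarrow> 'i \<Rightarrow> int) \<Rightarrow> 'i list \<Rightarrow> ('i vec \<Rightarrow> 'i vec \<Rightarrow> int) \<Rightarrow> bool" where
  "is_compat_c A w f \<longleftrightarrow>
     (\<forall>a\<in>ap_roots A w. \<forall>g\<in>ap_roots A w. f (tau_c A w a) (tau_c A w g) = f a g) \<and>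
     (\<forall>i. \<forall>a\<in>ap_roots A w. f (neg (beta A w i)) a = max (a i) 0)"

end

theory Submission
  imports Defs "HOL-Analysis.Analysis"
begin

text \<open>
  Write sigma for tau_- o tau_+. The map t_- sends alpha_i (i in I_+) and -alpha_i (i in I_-)
  exactly onto the roots beta_i of the Coxeter element t = t_+ t_-, and a case analysis on these
  vectors gives tau_t o t_- = t_- o sigma. Hence both compatibility degrees, read through t_-,
  are sigma-invariant, and they agree when the first argument is a negative simple root. Every
  sigma-orbit in the almost positive roots meets the negative simple roots: otherwise sigma acts
  on the orbit as the Coxeter element t_- t_+, the orbit is periodic because Phi is finite, and
  the sum over a period is a nonzero vector fixed by t_- t_+, which is impossible because the
  Cartan matrix is nonsingular.

  Finite type enters through the positive definite symmetrised form (finiteness of Phi, the rank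
  two classification) and through sign coherence of the roots, proved by the usual length argument
  with rank two parabolic subgroups.
\<close>

section \<open>Reflections on the root lattice\<close>

lemma sum_mult_simple:
  fixes f :: "'i::finite \<Rightarrow> int"
  shows "(\<Sum>l\<in>UNIV. f l * simple j l) = f j"
proof -
  have "(\<Sum>l\<in>UNIV. f l * simple j l) = (\<Sum>l\<in>UNIV. if l = j then f l else 0)"
    by (rule sum.cong) (auto simp: simple_def)
  then show ?thesis by simp
qed

lemma sum_UNIV_two:
  fixes f :: "'i::finite \<Rightarrow> 'a::comm_monoid_add"
  assumes "j \<noteq> s" "\<And>l. l \<noteq> j \<Longrightarrow> l \<noteq> s \<Longrightarrow> f l = 0"
  shows "(\<Sum>l\<in>UNIV. f l) = f j + f s"
proof -
  have "(\<Sum>l\<in>{j,s}. f l) = (\<Sum>l\<in>UNIV. f l)"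
    by (rule sum.mono_neutral_left) (use assms in auto)
  then show ?thesis using assms by simp
qed

lemma neg_neg [simp]: "neg (neg v) = v"
  by (simp add: neg_def)

lemma simple_eq_iff [simp]: "simple i = simple j \<longleftrightarrow> i = j"
  by (metis simple_def zero_neq_one)

lemma neg_simple_eq_iff [simp]: "neg (simple i) = neg (simple j) \<longleftrightarrow> i = j"
  by (metis neg_neg simple_eq_iff)

lemma simple_ne_neg_simple [simp]: "simple i \<noteq> neg (simple j)"
  by (metis neg_def simple_def zero_neq_neg_one neg_equal_0_iff_equal one_neq_neg_one)

lemma simple_pos_root: "simple i \<in> pos_roots A"
  using roots.simple_root[of i A] by (simp add: pos_roots_def) (simp add: simple_def)

lemma pos_root_ne_neg_simple: "a \<in> pos_roots A \<Longrightarrow> a \<noteq> neg (simple i)"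
  by (auto simp: pos_roots_def neg_def simple_def dest!: fun_cong[of _ _ i] spec[of _ i])

lemma refl_word_append: "refl_word A (u @ w) = refl_word A u \<circ> refl_word A w"
  by (induction u) auto

lemma srefl_srefl:
  assumes "A i i = 2"
  shows "srefl A i (srefl A i v) = v"
proof -
  define c where "c = (\<Sum>k\<in>UNIV. A i k * v k)"
  have "srefl A i v = (\<lambda>l. v l - c * simple i l)"
    by (auto simp: srefl_def simple_def c_def)
  then have "(\<Sum>l\<in>UNIV. A i l * srefl A i v l) = c - c * (\<Sum>l\<in>UNIV. A i l * simple i l)"
    by (simp add: c_def right_diff_distrib sum_subtractf sum_distrib_left algebra_simps)
  also have "\<dots> = - c"
    using assms by (simp add: sum_mult_simple)
  finally show ?thesis
    by (auto simp: srefl_def c_def)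
qed

lemma srefl_linear: "srefl A i (\<lambda>k. p * u k + q * v k) = (\<lambda>k. p * srefl A i u k + q * srefl A i v k)"
  by (rule ext) (simp add: srefl_def sum.distrib sum_distrib_left algebra_simps)

lemma refl_word_linear:
  "refl_word A w (\<lambda>k. p * u k + q * v k) = (\<lambda>k. p * refl_word A w u k + q * refl_word A w v k)"
  by (induction w) (auto simp: srefl_linear)

lemma refl_word_neg: "refl_word A w (neg v) = neg (refl_word A w v)"
  using refl_word_linear[of A w "-1" v 0 v] by (simp add: neg_def[abs_def])

lemma refl_word_rev_cancel:
  assumes "\<forall>i. A i i = 2"
  shows "refl_word A (rev w) (refl_word A w v) = v"
  using assms by (induction w arbitrary: v) (auto simp: refl_word_append srefl_srefl)

lemma refl_word_snoc_cancel:
  assumes "A j j = 2"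
  shows "refl_word A (w @ [j]) \<circ> srefl A j = refl_word A w"
  using assms by (auto simp: refl_word_append srefl_srefl)

lemma srefl_simple_self:
  assumes "A i i = 2"
  shows "srefl A i (simple i) = neg (simple i)"
  using assms sum_mult_simple[of "A i" i]
  by (auto simp: srefl_def neg_def fun_eq_iff) (auto simp: simple_def)

lemma refl_word_root: "v \<in> roots A \<Longrightarrow> refl_word A w v \<in> roots A"
  by (induction w) (auto intro: roots.intros)

lemma root_obtain_word:
  assumes "v \<in> roots A"
  obtains w i where "v = refl_word A w (simple i)"
  using assms
proof (induction arbitrary: thesis rule: roots.induct)
  case (simple_root i)
  then show ?case by (metis id_apply refl_word.simps(1))
next
  case (refl_root v i)
  then show ?case by (metis comp_apply refl_word.simps(2))
qed

lemma root_nonzero: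
  assumes "\<forall>i. A i i = 2" "v \<in> roots A"
  shows "v \<noteq> (\<lambda>k. 0)"
proof
  assume "v = (\<lambda>k. 0)"
  moreover obtain w i where "v = refl_word A w (simple i)"
    using root_obtain_word[OF assms(2)] .
  ultimately have "simple i = refl_word A (rev w) (\<lambda>k. 0)"
    using refl_word_rev_cancel[of A w, OF assms(1)] by metis
  also have "\<dots> = (\<lambda>k. 0)"
    using refl_word_linear[of A "rev w" 0 "\<lambda>k. 0" 0 "\<lambda>k. 0"] by simp
  finally show False
    by (metis simple_def zero_neq_one)
qed

definition orthogonal_set :: "('i \<Rightarrow> 'i \<Rightarrow> int) \<Rightarrow> 'i set \<Rightarrow> bool" where
  "orthogonal_set A X \<longleftrightarrow> (\<forall>i\<in>X. \<forall>j\<in>X. i \<noteq> j \<longrightarrow> A i j = 0)"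

definition refl_set :: "('i::finite \<Rightarrow> 'i \<Rightarrow> int) \<Rightarrow> 'i set \<Rightarrow> ('i \<Rightarrow> int) \<Rightarrow> ('i \<Rightarrow> int)" where
  "refl_set A X v = (\<lambda>k. if k \<in> X then v k - (\<Sum>l\<in>UNIV. A k l * v l) else v k)"

lemma refl_set_outside [simp]: "k \<notin> X \<Longrightarrow> refl_set A X v k = v k"
  by (simp add: refl_set_def)

lemma refl_word_eq_refl_set:
  assumes "distinct w" "orthogonal_set A (set w)"
  shows "refl_word A w = refl_set A (set w)"
  using assms
proof (induction w)
  case Nil
  then show ?case by (auto simp: refl_set_def)
next
  case (Cons i w)
  then have IH: "refl_word A w = refl_set A (set w)"
    by (auto simp: orthogonal_set_def)
  have "(\<Sum>l\<in>UNIV. A i l * refl_set A (set w) v l) = (\<Sum>l\<in>UNIV. A i l * v l)" for v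
    using Cons.prems by (intro sum.cong) (auto simp: refl_set_def orthogonal_set_def)
  moreover have "refl_set A (set w) v i = v i" for v
    using Cons.prems by simp
  ultimately show ?case
    by (auto simp: IH srefl_def refl_set_def fun_eq_iff)
qed

lemma refl_word_fixes_simple:
  assumes "\<forall>k\<in>set w. k \<noteq> i \<and> A k i = 0"
  shows "refl_word A w (simple i) = simple i"
  using assms
proof (induction w)
  case (Cons k w)
  then show ?case
    using sum_mult_simple[of "A k" i] by (auto simp: srefl_def fun_eq_iff)
qed simp

lemma beta_append_notin: "i \<notin> set u \<Longrightarrow> beta A (u @ w) i = beta A w i"
  by (induction u) auto

lemma beta_append_at: "i \<notin> set u \<Longrightarrow> beta A (u @ i # v) i = refl_word A (rev v) (simple i)"
  by (induction u) auto

section \<open>Finite type Cartan matrices\<close>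

locale cartan =
  fixes A :: "'i::finite \<Rightarrow> 'i \<Rightarrow> int"
  assumes finite_type: "finite_type_cartan A"
begin

lemma cartan_diag [simp]: "A i i = 2"
  using finite_type unfolding finite_type_cartan_def by auto

lemma cartan_diag_all: "\<forall>i. A i i = 2"
  by simp

lemma cartan_offdiag: "i \<noteq> j \<Longrightarrow> A i j \<le> 0"
  using finite_type unfolding finite_type_cartan_def by auto

lemma cartan_zero_sym: "A i j = 0 \<longleftrightarrow> A j i = 0"
  using finite_type unfolding finite_type_cartan_def by auto

definition symmetrizer :: "'i \<Rightarrow> real" where
  "symmetrizer = (SOME d. (\<forall>i. d i > 0) \<and> (\<forall>i j. d i * of_int (A i j) = d j * of_int (A j i)) \<and>
        (\<forall>x :: 'i \<Rightarrow> real. (\<exists>i. x i \<noteq> 0) \<longrightarrow>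
            (\<Sum>i\<in>UNIV. \<Sum>j\<in>UNIV. x i * d i * of_int (A i j) * x j) > 0))"

definition bform :: "('i \<Rightarrow> real) \<Rightarrow> ('i \<Rightarrow> real) \<Rightarrow> real" where
  "bform x y = (\<Sum>i\<in>UNIV. \<Sum>j\<in>UNIV. x i * symmetrizer i * of_int (A i j) * y j)"

abbreviation qform :: "('i \<Rightarrow> real) \<Rightarrow> real" where
  "qform x \<equiv> bform x x"

lemma symmetrizer_props:
  "(\<forall>i. symmetrizer i > 0) \<and> (\<forall>i j. symmetrizer i * of_int (A i j) = symmetrizer j * of_int (A j i)) \<and>
   (\<forall>x. (\<exists>i. x i \<noteq> 0) \<longrightarrow> qform x > 0)"
  unfolding bform_def symmetrizer_def
  using finite_type unfolding finite_type_cartan_def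
  by (rule someI_ex[OF conjunct2[OF conjunct2[OF conjunct2]]])

lemma symmetrizer_pos: "symmetrizer i > 0"
  using symmetrizer_props by blast

lemma symmetrizer_sym: "symmetrizer i * of_int (A i j) = symmetrizer j * of_int (A j i)"
  using symmetrizer_props by blast

lemma qform_pos: "x i \<noteq> 0 \<Longrightarrow> qform x > 0"
  using symmetrizer_props by blast

lemma bform_diff_left: "bform (\<lambda>i. x i - c * u i) y = bform x y - c * bform u y"
  unfolding bform_def by (simp add: algebra_simps sum_subtractf sum_distrib_left)

lemma bform_diff_right: "bform x (\<lambda>j. y j - c * u j) = bform x y - c * bform x u"
  unfolding bform_def by (simp add: algebra_simps sum_subtractf sum_distrib_left)

lemma bform_simple_left:
  "bform (\<lambda>i. of_int (simple k i)) y = symmetrizer k * (\<Sum>j\<in>UNIV. of_int (A k j) * y j)"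
proof -
  have "bform (\<lambda>i. of_int (simple k i)) y =
      (\<Sum>i\<in>UNIV. if i = k then (\<Sum>j\<in>UNIV. symmetrizer k * of_int (A k j) * y j) else 0)"
    unfolding bform_def by (intro sum.cong) (auto simp: simple_def mult.assoc)
  then show ?thesis
    by (simp add: sum_distrib_left mult.assoc)
qed

lemma bform_simple_right:
  "bform x (\<lambda>j. of_int (simple k j)) = symmetrizer k * (\<Sum>i\<in>UNIV. of_int (A k i) * x i)"
proof -
  have "bform x (\<lambda>j. of_int (simple k j)) = (\<Sum>i\<in>UNIV. x i * symmetrizer i * of_int (A i k))"
    unfolding bform_def by (intro sum.cong) (auto simp: simple_def if_distrib cong: if_cong)
  also have "\<dots> = (\<Sum>i\<in>UNIV. symmetrizer k * (of_int (A k i) * x i))"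
    by (intro sum.cong) (auto simp: mult.assoc symmetrizer_sym[of _ k] mult.commute)
  finally show ?thesis
    by (simp add: sum_distrib_left)
qed

lemma qform_simple: "qform (\<lambda>j. of_int (simple k j)) = 2 * symmetrizer k"
proof -
  have "(\<Sum>j\<in>UNIV. of_int (A k j) * of_int (simple k j)) =
      (\<Sum>j\<in>UNIV. if j = k then of_int (A k j) else (0::real))"
    by (intro sum.cong) (auto simp: simple_def)
  then show ?thesis
    by (simp add: bform_simple_left)
qed

lemma qform_srefl: "qform (\<lambda>j. of_int (srefl A k v j)) = qform (\<lambda>j. of_int (v j))"
proof -
  define x where "x = (\<lambda>j. real_of_int (v j))"
  define e where "e = (\<lambda>j. real_of_int (simple k j))"
  define c where "c = (\<Sum>l\<in>UNIV. of_int (A k l) * x l)"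
  have "(\<lambda>j. real_of_int (srefl A k v j)) = (\<lambda>j. x j - c * e j)"
    by (auto simp: srefl_def x_def e_def c_def simple_def)
  moreover have eqs: "bform e x = symmetrizer k * c" "bform x e = symmetrizer k * c"
    "bform e e = 2 * symmetrizer k"
    using bform_simple_left[of k] bform_simple_right[of _ k] qform_simple[of k]
    by (simp_all add: e_def c_def)
  ultimately have "qform (\<lambda>j. of_int (srefl A k v j)) =
      qform x - c * bform e x - c * (bform x e - c * bform e e)"
    by (simp add: bform_diff_left bform_diff_right)
  also have "\<dots> = qform x"
    using eqs by (simp add: algebra_simps)
  finally show ?thesis
    by (simp add: x_def)
qed

lemma qform_root: "v \<in> roots A \<Longrightarrow> \<exists>i. qform (\<lambda>j. of_int (v j)) = 2 * symmetrizer i"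
proof (induction rule: roots.induct)
  case (simple_root i)
  then show ?case
    using qform_simple by blast
next
  case (refl_root v i)
  then show ?case using qform_srefl by auto
qed

lemma cartan_rank2_product_le:
  assumes "j \<noteq> s"
  shows "A j s * A s j \<le> 3"
proof -
  define d where "d = symmetrizer"
  define x :: "'i \<Rightarrow> real"
    where "x = (\<lambda>i. if i = j then 2 * d s else if i = s then - d j * of_int (A j s) else 0)"
  have dpos: "d j > 0" "d s > 0"
    using symmetrizer_pos by (simp_all add: d_def)
  have inner: "(\<Sum>k\<in>UNIV. x i * d i * of_int (A i k) * x k) =
      x i * d i * of_int (A i j) * x j + x i * d i * of_int (A i s) * x s" for i
    by (rule sum_UNIV_two) (use assms in \<open>auto simp: x_def\<close>)
  have "qform x = (x j * d j * 2 * x j + x j * d j * of_int (A j s) * x s) +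
      (x s * d s * of_int (A s j) * x j + x s * d s * 2 * x s)"
    unfolding bform_def d_def[symmetric] inner by (subst sum_UNIV_two[OF assms]) (auto simp: x_def)
  also have "\<dots> = 2 * d j * d s * d s * (4 - of_int (A j s * A s j))"
    using assms by (simp add: x_def algebra_simps)
  finally have "0 < 2 * d j * d s * d s * (4 - of_int (A j s * A s j))"
    using qform_pos[of x j] dpos by (simp add: x_def)
  moreover have "0 < 2 * d j * d s * d s"
    using dpos by simp
  ultimately have "(0::real) < 4 - of_int (A j s * A s j)"
    by (rule zero_less_mult_pos)
  then show ?thesis
    by linarith
qed

lemma cartan_rank2_cases:
  assumes "j \<noteq> s"
  shows "(A j s = 0 \<and> A s j = 0) \<or> (A j s = -1 \<and> A s j = -1) \<or> (A j s = -1 \<and> A s j = -2) \<or>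
     (A j s = -2 \<and> A s j = -1) \<or> (A j s = -1 \<and> A s j = -3) \<or> (A j s = -3 \<and> A s j = -1)"
proof -
  define a where "a = - A j s"
  define b where "b = - A s j"
  have "a \<ge> 0" "b \<ge> 0"
    using cartan_offdiag[of j s] cartan_offdiag[of s j] assms by (auto simp: a_def b_def)
  moreover have "a = 0 \<longleftrightarrow> b = 0"
    using cartan_zero_sym[of j s] by (auto simp: a_def b_def)
  moreover have "a * b \<le> 3"
    using cartan_rank2_product_le[OF assms] by (simp add: a_def b_def)
  ultimately have "(a = 0 \<and> b = 0) \<or> (a = 1 \<and> b = 1) \<or> (a = 1 \<and> b = 2) \<or> (a = 2 \<and> b = 1) \<or>
      (a = 1 \<and> b = 3) \<or> (a = 3 \<and> b = 1)"
  proof (cases "a = 0")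
    case False
    with \<open>a = 0 \<longleftrightarrow> b = 0\<close> \<open>a \<ge> 0\<close> \<open>b \<ge> 0\<close> have "a \<ge> 1" "b \<ge> 1"
      by auto
    with \<open>a * b \<le> 3\<close> have "a \<le> 3" "b \<le> 3"
      by (smt (verit) mult_le_cancel_left1 mult_le_cancel_right1)+
    with \<open>a \<ge> 1\<close> \<open>b \<ge> 1\<close> have "a \<in> {1,2,3}" "b \<in> {1,2,3}"
      by auto
    then show ?thesis
      using \<open>a * b \<le> 3\<close> by auto
  qed simp
  then show ?thesis
    by (auto simp: a_def b_def)
qed

lemma cartan_kernel_trivial:
  assumes "\<forall>k. (\<Sum>l\<in>UNIV. A k l * z l) = 0"
  shows "z = (\<lambda>k. 0)"
proof (rule ccontr)
  assume "z \<noteq> (\<lambda>k. 0)"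
  then obtain i where "z i \<noteq> 0"
    by auto
  define x where "x = (\<lambda>k. real_of_int (z k))"
  have "qform x = (\<Sum>i\<in>UNIV. x i * symmetrizer i * of_int (\<Sum>j\<in>UNIV. A i j * z j))"
    by (simp add: bform_def x_def sum_distrib_left algebra_simps)
  also have "\<dots> = 0"
    using assms by simp
  finally show False
    using qform_pos[of x i] \<open>z i \<noteq> 0\<close> by (simp add: x_def)
qed

lemma qform_scale: "qform (\<lambda>i. c * x i) = c * c * qform x"
  unfolding bform_def by (simp add: sum_distrib_left algebra_simps)

lemma qform_lower_bound: "\<exists>c > 0. \<forall>x i. qform x \<ge> c * (x i)\<^sup>2"
proof -
  define F :: "real^'i \<Rightarrow> real" where "F y = qform (\<lambda>i. y $ i)" for y
  have cont: "continuous_on (sphere 0 1) F"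
    unfolding F_def bform_def by (intro continuous_intros)
  obtain i0 :: 'i where True
    by blast
  have "axis i0 1 \<in> sphere (0::real^'i) 1"
    by (simp add: norm_axis_1)
  then obtain y0 where y0: "y0 \<in> sphere 0 1" "\<forall>y\<in>sphere 0 1. F y0 \<le> F y"
    using continuous_attains_inf[OF compact_sphere _ cont] by blast
  then have "y0 \<noteq> 0"
    by auto
  then obtain i where "y0 $ i \<noteq> 0"
    by (auto simp: vec_eq_iff)
  then have F0: "F y0 > 0"
    unfolding F_def by (rule qform_pos)
  have "F y0 * (x i)\<^sup>2 \<le> qform x" for x i
  proof (cases "\<forall>i. x i = 0")
    case True
    then have "x = (\<lambda>i. 0 * x i)"
      by auto
    then show ?thesis
      using True qform_scale[of 0 x] by simp
  next
    case False
    define y :: "real^'i" where "y = (\<chi> i. x i)"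
    have ny: "norm y > 0"
      using False by (auto simp: y_def vec_eq_iff)
    have "F y0 \<le> F ((1 / norm y) *\<^sub>R y)"
      using y0 ny by simp
    also have "\<dots> = (1 / norm y) * (1 / norm y) * qform x"
      using qform_scale[of "1 / norm y" x] by (simp add: F_def y_def)
    finally have bound: "F y0 * (norm y * norm y) \<le> qform x"
      using ny by (simp add: field_simps)
    have xi: "\<bar>x i\<bar> \<le> norm y"
      using component_le_norm_cart[of y i] by (simp add: y_def)
    have "(x i)\<^sup>2 \<le> norm y * norm y"
      using mult_mono[OF xi xi] by (simp add: power2_eq_square)
    then have "F y0 * (x i)\<^sup>2 \<le> F y0 * (norm y * norm y)"
      using F0 by (simp add: mult_left_mono)
    with bound show ?thesis
      by linarith
  qed
  then show ?thesis
    using F0 by blast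
qed

lemma finite_roots: "finite (roots A)"
proof -
  obtain c where c: "c > 0" "\<forall>x i. qform x \<ge> c * (x i)\<^sup>2"
    using qform_lower_bound by blast
  define M where "M = (\<Sum>i\<in>UNIV. 2 * symmetrizer i)"
  define K where "K = \<lceil>M / c\<rceil>"
  have "\<bar>v i\<bar> \<le> K" if v: "v \<in> roots A" for v i
  proof -
    obtain i0 where q: "qform (\<lambda>j. of_int (v j)) = 2 * symmetrizer i0"
      using qform_root[OF v] by blast
    have "2 * symmetrizer i0 \<le> M"
      unfolding M_def by (rule member_le_sum) (simp_all add: symmetrizer_pos less_imp_le)
    then have "c * (of_int (v i))\<^sup>2 \<le> M"
      using c(2)[rule_format, of "\<lambda>j. of_int (v j)" i] q by simp
    then have "(of_int (v i))\<^sup>2 \<le> M / c"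
      using c(1) by (simp add: field_simps)
    moreover have "\<bar>v i\<bar> \<le> (v i)\<^sup>2"
      using self_le_power[of "\<bar>v i\<bar>" 2] by (cases "v i = 0") (simp_all add: power2_abs)
    ultimately show ?thesis
      unfolding K_def by (smt (verit) of_int_le_iff of_int_power le_of_int_ceiling)
  qed
  then have "roots A \<subseteq> Pi UNIV (\<lambda>_. {-K..K})"
    by (fastforce simp: abs_le_iff minus_le_iff)
  moreover have "finite (Pi UNIV (\<lambda>_::'i. {-K..K}))"
    using finite_PiE[of "UNIV::'i set" "\<lambda>_. {-K..K}"] by (simp add: PiE_UNIV_domain)
  ultimately show ?thesis
    by (rule finite_subset)
qed

end

section \<open>Sign coherence of roots\<close>

fun alt_word :: "'a \<Rightarrow> 'a \<Rightarrow> nat \<Rightarrow> 'a list" where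
  "alt_word x y 0 = []"
| "alt_word x y (Suc k) = x # alt_word y x k"

lemma length_alt_word [simp]: "length (alt_word x y k) = k"
  by (induction k arbitrary: x y) auto

lemma set_alt_word: "set (alt_word x y k) \<subseteq> {x, y}"
  by (induction k arbitrary: x y) auto

lemma last_alt_word: "last (alt_word x y (Suc k)) = (if even k then x else y)"
  by (induction k arbitrary: x y) auto

lemma alt_word_add: "\<exists>rest. alt_word x y (k + r) = alt_word x y k @ rest \<and> set rest \<subseteq> {x, y}"
proof (induction k arbitrary: x y)
  case 0
  then show ?case using set_alt_word[of x y r] by auto
next
  case (Suc k)
  then obtain rest where "alt_word y x (k + r) = alt_word y x k @ rest \<and> set rest \<subseteq> {y, x}"
    by blast
  then show ?case by auto
qed

lemma not_distinct_adj_split: "\<not> distinct_adj w \<Longrightarrow> \<exists>p z q. w = p @ z # z # q"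
proof (induction w rule: induct_list012)
  case (3 x y w)
  show ?case
  proof (cases "x = y")
    case True
    then show ?thesis by (metis append_Nil)
  next
    case False
    with 3 obtain p z q where "y # w = p @ z # z # q"
      by auto
    then show ?thesis by (metis Cons_eq_appendI)
  qed
qed auto

lemma distinct_adj_eq_alt_word:
  assumes "distinct_adj w" "set w \<subseteq> {x, y}" "x \<noteq> y" "w \<noteq> []" "hd w = x"
  shows "w = alt_word x y (length w)"
  using assms
proof (induction w arbitrary: x y)
  case (Cons z w)
  show ?case
  proof (cases w)
    case (Cons z' w')
    with Cons.prems have "w = alt_word y x (length w)"
      by (intro Cons.IH) auto
    then show ?thesis using Cons.prems by simp
  qed (use Cons in simp)
qed simp

context cartan
begin

definition dihedral_vec :: "'i \<Rightarrow> 'i \<Rightarrow> int \<Rightarrow> int \<Rightarrow> ('i \<Rightarrow> int)" where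
  "dihedral_vec j s p q = (\<lambda>k. p * simple j k + q * simple s k)"

lemma dihedral_vec_swap: "dihedral_vec j s p q = dihedral_vec s j q p"
  by (rule ext) (simp add: dihedral_vec_def)

lemma simple_eq_dihedral_vec: "j \<noteq> s \<Longrightarrow> simple j = dihedral_vec j s 1 0"
  by (rule ext) (simp add: dihedral_vec_def simple_def)

lemma srefl_dihedral_vec_fst:
  assumes "j \<noteq> s"
  shows "srefl A j (dihedral_vec j s p q) = dihedral_vec j s (- p - A j s * q) q"
proof -
  have "(\<Sum>l\<in>UNIV. A j l * dihedral_vec j s p q l) =
      p * (\<Sum>l\<in>UNIV. A j l * simple j l) + q * (\<Sum>l\<in>UNIV. A j l * simple s l)"
    by (simp add: dihedral_vec_def sum.distrib sum_distrib_left algebra_simps)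
  also have "\<dots> = 2 * p + A j s * q"
    by (simp add: sum_mult_simple)
  finally show ?thesis
    using assms by (intro ext) (auto simp: srefl_def dihedral_vec_def simple_def)
qed

lemma srefl_dihedral_vec_snd:
  assumes "j \<noteq> s"
  shows "srefl A s (dihedral_vec j s p q) = dihedral_vec j s p (- q - A s j * p)"
  using srefl_dihedral_vec_fst[of s j q p] assms by (simp add: dihedral_vec_swap)

definition coxeter_order :: "'i \<Rightarrow> 'i \<Rightarrow> nat" where
  "coxeter_order j s = (if A j s * A s j = 0 then 2 else if A j s * A s j = 1 then 3
       else if A j s * A s j = 2 then 4 else 6)"

lemma coxeter_order_ge_2: "2 \<le> coxeter_order j s"
  by (simp add: coxeter_order_def)

lemma coxeter_order_sym: "coxeter_order j s = coxeter_order s j"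
  by (simp add: coxeter_order_def mult.commute)

context
  fixes j s :: 'i
  assumes js: "j \<noteq> s"
begin

definition rest_sum :: "'i \<Rightarrow> ('i \<Rightarrow> int) \<Rightarrow> int" where
  "rest_sum i v = (\<Sum>l\<in>UNIV-{j,s}. A i l * v l)"

lemma rest_sum_upd [simp]: "rest_sum i (v(j := x)) = rest_sum i v" "rest_sum i (v(s := x)) = rest_sum i v"
  unfolding rest_sum_def by (auto intro: sum.cong)

lemma sum_split_pair: "(\<Sum>l\<in>UNIV. A i l * v l) = A i j * v j + A i s * v s + rest_sum i v"
proof -
  have "(\<Sum>l\<in>UNIV. A i l * v l) = A i j * v j + (\<Sum>l\<in>UNIV-{j}. A i l * v l)"
    by (subst sum.remove[of UNIV j]) auto
  moreover have "(\<Sum>l\<in>UNIV-{j}. A i l * v l) = A i s * v s + (\<Sum>l\<in>UNIV-{j}-{s}. A i l * v l)"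
    using js by (subst sum.remove[of "UNIV-{j}" s]) auto
  ultimately show ?thesis
    by (simp add: rest_sum_def set_diff_eq insert_commute)
qed

lemma srefl_fst_upd: "srefl A j v = v(j := - v j - A j s * v s - rest_sum j v)"
  by (rule ext) (auto simp: srefl_def sum_split_pair)

lemma srefl_snd_upd: "srefl A s v = v(s := - v s - A s j * v j - rest_sum s v)"
  using js by (intro ext) (auto simp: srefl_def sum_split_pair)

text \<open>A direct computation in each of the six rank two cases; \<open>rest_sum\<close> is the part of the
  pairing that neither reflection changes.\<close>

lemma braid_relation: "refl_word A (alt_word j s (coxeter_order j s)) = refl_word A (alt_word s j (coxeter_order j s))"
proof (rule ext)
  fix v
  show "refl_word A (alt_word j s (coxeter_order j s)) v = refl_word A (alt_word s j (coxeter_order j s)) v"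
    using cartan_rank2_cases[OF js] js
    by (elim disjE; simp add: coxeter_order_def eval_nat_numeral srefl_fst_upd srefl_snd_upd;
        intro ext; simp; simp add: algebra_simps)
qed

end

lemma dihedral_short_word_positive:
  assumes "j \<noteq> s" "L < coxeter_order j s" "(z = j \<and> z' = s) \<or> (z = s \<and> z' = j)"
    and "last (alt_word z z' L) = s"
  shows "\<exists>p q. p \<ge> 0 \<and> q \<ge> 0 \<and> refl_word A (alt_word z z' L) (dihedral_vec j s 1 0) = dihedral_vec j s p q"
proof -
  have "L < 6"
    using assms(2) by (auto simp: coxeter_order_def split: if_splits)
  then have "L = 0 \<or> L = 1 \<or> L = 2 \<or> L = 3 \<or> L = 4 \<or> L = 5"
    by auto
  then show ?thesis
    using cartan_rank2_cases[OF assms(1)] assms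
    by (elim disjE, auto simp: coxeter_order_def eval_nat_numeral srefl_dihedral_vec_fst srefl_dihedral_vec_snd,
        (intro exI conjI refl; simp)+)
qed

definition word_length :: "'i set \<Rightarrow> (('i \<Rightarrow> int) \<Rightarrow> ('i \<Rightarrow> int)) \<Rightarrow> nat" where
  "word_length S x = (LEAST n. \<exists>w. set w \<subseteq> S \<and> length w = n \<and> refl_word A w = x)"

abbreviation len :: "(('i \<Rightarrow> int) \<Rightarrow> ('i \<Rightarrow> int)) \<Rightarrow> nat" where
  "len \<equiv> word_length UNIV"

lemma word_length_le: "set w \<subseteq> S \<Longrightarrow> word_length S (refl_word A w) \<le> length w"
  unfolding word_length_def by (rule Least_le) blast

lemma reduced_word_exists:
  assumes "set w \<subseteq> S"
  obtains w' where "set w' \<subseteq> S" "length w' = word_length S (refl_word A w)" "refl_word A w' = refl_word A w"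
proof -
  have "\<exists>w'. set w' \<subseteq> S \<and> length w' = word_length S (refl_word A w) \<and> refl_word A w' = refl_word A w"
    unfolding word_length_def by (rule LeastI_ex) (use assms in blast)
  then show ?thesis
    using that by blast
qed

lemma word_length_comp:
  assumes "set u \<subseteq> S"
  shows "len (refl_word A y \<circ> refl_word A u) \<le> len (refl_word A y) + word_length S (refl_word A u)"
proof -
  obtain y' where "length y' = len (refl_word A y)" "refl_word A y' = refl_word A y"
    using reduced_word_exists[of y UNIV] by auto
  moreover obtain u' where "set u' \<subseteq> S" "length u' = word_length S (refl_word A u)" "refl_word A u' = refl_word A u"
    using reduced_word_exists[OF assms] by auto
  moreover have "len (refl_word A (y' @ u')) \<le> length (y' @ u')"
    using word_length_le[of "y' @ u'" UNIV] by simp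
  ultimately show ?thesis
    by (simp add: refl_word_append)
qed

lemma word_length_Cons_le:
  assumes "set (r # u) \<subseteq> S"
  shows "word_length S (refl_word A (r # u)) \<le> word_length S (refl_word A u) + 1"
proof -
  obtain u' where "set u' \<subseteq> S" "length u' = word_length S (refl_word A u)" "refl_word A u' = refl_word A u"
    using reduced_word_exists[of u S] assms by auto
  moreover have "word_length S (refl_word A (r # u')) \<le> length (r # u')"
    using word_length_le[of "r # u'" S] assms \<open>set u' \<subseteq> S\<close> by simp
  ultimately show ?thesis
    by simp
qed

lemma word_length_drop_last:
  assumes "set w \<subseteq> S" "w \<noteq> []"
  shows "word_length S (refl_word A w \<circ> srefl A (last w)) < length w"
proof -
  have "refl_word A w \<circ> srefl A (last w) = refl_word A (butlast w)"
    using refl_word_snoc_cancel[of A "last w" "butlast w"] assms(2) by simp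
  moreover have "word_length S (refl_word A (butlast w)) \<le> length (butlast w)"
    using assms(1) in_set_butlastD by (fastforce intro: word_length_le)
  moreover have "length (butlast w) < length w"
    using assms(2) by simp
  ultimately show ?thesis
    by simp
qed

lemma reduced_word_distinct_adj:
  assumes "set w \<subseteq> S" "length w = word_length S (refl_word A w)"
  shows "distinct_adj w"
proof (rule ccontr)
  assume "\<not> distinct_adj w"
  then obtain p z q where w: "w = p @ z # z # q"
    using not_distinct_adj_split by blast
  then have "refl_word A w = refl_word A (p @ q)"
    by (simp add: refl_word_append fun_eq_iff srefl_srefl)
  then have "word_length S (refl_word A w) \<le> length (p @ q)"
    using word_length_le[of "p @ q" S] assms(1) w by auto
  then show False
    using assms(2) w by simp
qed

lemma reduced_alt_word_le_coxeter_order: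
  assumes "z \<noteq> z'" "word_length {z, z'} (refl_word A (alt_word z z' L)) = L"
  shows "L \<le> coxeter_order z z'"
proof (rule ccontr)
  define m where "m = coxeter_order z z'"
  assume "\<not> L \<le> coxeter_order z z'"
  then obtain r where r: "L = Suc m + r"
    by (metis m_def add_Suc less_imp_Suc_add not_le_imp_less)
  obtain rest where rest: "alt_word z z' L = alt_word z z' (Suc m) @ rest" "set rest \<subseteq> {z, z'}"
    using alt_word_add[of z z' "Suc m" r] r by blast
  obtain k where k: "m = Suc k"
    using coxeter_order_ge_2[of z z'] by (cases m) (auto simp: m_def)
  have "refl_word A (alt_word z z' (Suc m)) = srefl A z \<circ> refl_word A (alt_word z' z m)"
    by simp
  also have "\<dots> = srefl A z \<circ> refl_word A (alt_word z z' m)"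
    using braid_relation[of z' z] assms(1) by (simp add: m_def coxeter_order_sym)
  also have "\<dots> = refl_word A (alt_word z' z k)"
    by (auto simp: k srefl_srefl)
  finally have "refl_word A (alt_word z z' L) = refl_word A (alt_word z' z k @ rest)"
    by (simp add: rest(1) refl_word_append o_assoc)
  moreover have "set (alt_word z' z k @ rest) \<subseteq> {z, z'}"
    using set_alt_word[of z' z k] rest(2) by auto
  ultimately have "L \<le> length (alt_word z' z k @ rest)"
    using word_length_le assms(2) by metis
  moreover have "length rest = r"
    using arg_cong[OF rest(1), of length] r by simp
  ultimately show False
    using r k by simp
qed

lemma reduced_word_last_ne:
  assumes "set w \<subseteq> S" "w \<noteq> []" "refl_word A w = refl_word A u"
    and "length w \<le> word_length S (refl_word A (u @ [j]))"
  shows "last w \<noteq> j"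
proof
  assume "last w = j"
  then have "word_length S (refl_word A (u @ [j])) < length w"
    using word_length_drop_last[OF assms(1,2)] assms(3) by (simp add: refl_word_append)
  then show False
    using assms(4) by simp
qed

lemma reduced_word_alternating:
  assumes "j \<noteq> s" "set w \<subseteq> {j, s}" "length w = word_length {j, s} (refl_word A w)" "w \<noteq> []"
  obtains z z' where "{z, z'} = {j, s}" "z \<noteq> z'" "w = alt_word z z' (length w)"
proof -
  obtain z z' where zz: "{z, z'} = {j, s}" "hd w = z"
    using assms(2,4) hd_in_set by (metis insert_commute insert_iff singletonD subsetD)
  then have "z \<noteq> z'"
    using assms(1) by (metis doubleton_eq_iff)
  moreover have "w = alt_word z z' (length w)"
    using distinct_adj_eq_alt_word[OF reduced_word_distinct_adj[OF assms(2,3)] _ \<open>z \<noteq> z'\<close> assms(4)]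
      assms(2) zz by simp
  ultimately show thesis
    using that zz(1) by blast
qed

lemma dihedral_positive:
  assumes js: "j \<noteq> s" and u: "set u \<subseteq> {j, s}"
    and h: "word_length {j, s} (refl_word A u) \<le> word_length {j, s} (refl_word A (u @ [j]))"
  shows "\<exists>p q. p \<ge> 0 \<and> q \<ge> 0 \<and> refl_word A u (simple j) = dihedral_vec j s p q"
proof -
  let ?S = "{j, s}"
  obtain wr where wr: "set wr \<subseteq> ?S" "length wr = word_length ?S (refl_word A u)" "refl_word A wr = refl_word A u"
    using reduced_word_exists[OF u] by blast
  obtain L where L: "length wr = L"
    by blast
  have not_last_j: "last w \<noteq> j"
    if "set w \<subseteq> ?S" "w \<noteq> []" "length w = L" "refl_word A w = refl_word A u" for w
    using reduced_word_last_ne[OF that(1,2,4)] h wr(2) L that(3) by simp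
  show ?thesis
  proof (cases "wr = []")
    case True
    then show ?thesis
      using wr(3) simple_eq_dihedral_vec[OF js] by (metis id_apply order_refl refl_word.simps(1) zero_le_one)
  next
    case False
    then obtain z z' where zz: "{z, z'} = ?S" "z \<noteq> z'" and wralt: "wr = alt_word z z' L"
      using reduced_word_alternating[OF js wr(1)] wr(2,3) L by metis
    have cox: "coxeter_order z z' = coxeter_order j s"
      using zz(1) coxeter_order_sym by (metis doubleton_eq_iff)
    have "L \<le> coxeter_order j s"
      using reduced_alt_word_le_coxeter_order[OF zz(2)] wr wralt zz(1) L cox by simp
    moreover have "L \<noteq> coxeter_order j s"
    proof
      assume L: "L = coxeter_order j s"
      then obtain k where k: "L = Suc k"
        using coxeter_order_ge_2[of j s] not0_implies_Suc by force
      have "refl_word A (alt_word z' z L) = refl_word A u"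
        using braid_relation[of z z'] zz(2) wr(3) wralt cox L by (simp add: coxeter_order_sym)
      moreover have "last (alt_word z z' L) = j \<or> last (alt_word z' z L) = j"
        using zz(1) unfolding k last_alt_word by (auto simp: doubleton_eq_iff)
      ultimately show False
        using not_last_j[of "alt_word z z' L"] not_last_j[of "alt_word z' z L"] wr(3) wralt
          set_alt_word[of z z' L] set_alt_word[of z' z L] zz(1) k by auto
    qed
    ultimately have short: "L < coxeter_order j s"
      by simp
    have "last wr \<in> ?S"
      using wr(1) False by (meson last_in_set subsetD)
    moreover have "last wr \<noteq> j"
      using not_last_j[of wr] wr False L by auto
    ultimately have "last (alt_word z z' L) = s"
      using wralt by auto
    moreover have "(z = j \<and> z' = s) \<or> (z = s \<and> z' = j)"
      using zz by (auto simp: doubleton_eq_iff)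
    ultimately show ?thesis
      using dihedral_short_word_positive[OF js short] wr(3) wralt simple_eq_dihedral_vec[OF js] by metis
  qed
qed

text \<open>Humphreys, Reflection Groups and Coxeter Groups, 5.4: factor w through the parabolic subgroup
  generated by s_j and s_t, with the left factor as short as possible.\<close>

lemma parabolic_factorization:
  assumes jt: "j \<noteq> t"
    and short: "len (refl_word A w \<circ> srefl A t) < len (refl_word A w)"
    and long: "len (refl_word A w) \<le> len (refl_word A w \<circ> srefl A j)"
  obtains y u where "set u \<subseteq> {j, t}" "refl_word A w = refl_word A y \<circ> refl_word A u"
    "len (refl_word A y) < len (refl_word A w)"
    "\<And>r. r \<in> {j, t} \<Longrightarrow> len (refl_word A y) \<le> len (refl_word A (y @ [r]))"
    "word_length {j, t} (refl_word A u) \<le> word_length {j, t} (refl_word A (u @ [j]))"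
proof -
  let ?S = "{j, t}"
  define x where "x = refl_word A w"
  define P where "P = (\<lambda>(y, u). set u \<subseteq> ?S \<and> refl_word A y \<circ> refl_word A u = x
      \<and> len (refl_word A y) + word_length ?S (refl_word A u) \<le> len x)"
  obtain y0 where y0: "len (refl_word A y0) = len (x \<circ> srefl A t)" "refl_word A y0 = x \<circ> srefl A t"
    using reduced_word_exists[of "w @ [t]" UNIV] by (auto simp: x_def refl_word_append)
  have "refl_word A y0 \<circ> refl_word A [t] = x"
    using y0(2) by (simp add: fun_eq_iff srefl_srefl)
  moreover have "len (refl_word A y0) + word_length ?S (refl_word A [t]) \<le> len x"
    using y0(1) short word_length_le[of "[t]" ?S] by (simp add: x_def)
  ultimately have "P (y0, [t])"
    by (simp add: P_def)
  then obtain y u where P: "P (y, u)" and min: "\<And>y' u'. P (y', u') \<Longrightarrow> len (refl_word A y) \<le> len (refl_word A y')"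
    using ex_has_least_nat[of P "(y0, [t])" "\<lambda>(y, u). len (refl_word A y)"] by fastforce
  then have u: "set u \<subseteq> ?S" and x: "x = refl_word A y \<circ> refl_word A u"
    and n: "len (refl_word A y) + word_length ?S (refl_word A u) \<le> len x"
    by (auto simp: P_def)
  show thesis
  proof
    show "len (refl_word A y) < len (refl_word A w)"
      using min[OF \<open>P (y0, [t])\<close>] y0 short by (simp add: x_def)
  next
    fix r assume r: "r \<in> ?S"
    show "len (refl_word A y) \<le> len (refl_word A (y @ [r]))"
    proof (rule ccontr)
      assume shorter: "\<not> ?thesis"
      have "refl_word A (y @ [r]) \<circ> refl_word A (r # u) = x"
        by (simp add: x refl_word_append fun_eq_iff srefl_srefl)
      moreover have "word_length ?S (refl_word A (r # u)) \<le> word_length ?S (refl_word A u) + 1"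
        using word_length_Cons_le u r by simp
      ultimately have "P (y @ [r], r # u)"
        using u r n shorter by (auto simp: P_def)
      then show False
        using min shorter by fastforce
    qed
  next
    show "word_length ?S (refl_word A u) \<le> word_length ?S (refl_word A (u @ [j]))"
    proof (rule ccontr)
      assume "\<not> ?thesis"
      moreover have "len (x \<circ> srefl A j) \<le> len (refl_word A y) + word_length ?S (refl_word A (u @ [j]))"
        using word_length_comp[of "u @ [j]" ?S y] u by (simp add: x refl_word_append o_assoc)
      ultimately show False
        using n long by (simp add: x_def)
    qed
  qed (use u x in \<open>simp_all add: x_def\<close>)
qed

lemma refl_word_simple_nonneg:
  assumes "len (refl_word A w) \<le> len (refl_word A (w @ [j]))"
  shows "refl_word A w (simple j) k \<ge> 0"
  using assms
proof (induction "len (refl_word A w)" arbitrary: w j k rule: less_induct)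
  case less
  obtain w0 where w0: "length w0 = len (refl_word A w)" "refl_word A w0 = refl_word A w"
    using reduced_word_exists[of w UNIV] by auto
  show ?case
  proof (cases "w0 = []")
    case True
    then show ?thesis
      using w0(2) by (auto simp: simple_def)
  next
    case False
    define t where "t = last w0"
    have short: "len (refl_word A w \<circ> srefl A t) < len (refl_word A w)"
      using word_length_drop_last[of w0 UNIV] False w0 by (simp add: t_def)
    with less.prems have "t \<noteq> j"
      by (auto simp: refl_word_append)
    moreover have "len (refl_word A w) \<le> len (refl_word A w \<circ> srefl A j)"
      using less.prems by (simp add: refl_word_append)
    ultimately obtain y u where u: "set u \<subseteq> {j, t}" and x: "refl_word A w = refl_word A y \<circ> refl_word A u"
      and y: "len (refl_word A y) < len (refl_word A w)"
        "\<And>r. r \<in> {j, t} \<Longrightarrow> len (refl_word A y) \<le> len (refl_word A (y @ [r]))"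
      and dih: "word_length {j, t} (refl_word A u) \<le> word_length {j, t} (refl_word A (u @ [j]))"
      using parabolic_factorization short by metis
    obtain p q where pq: "p \<ge> 0" "q \<ge> 0" "refl_word A u (simple j) = dihedral_vec j t p q"
      using dihedral_positive[OF \<open>t \<noteq> j\<close>[symmetric] u dih] by blast
    have "refl_word A w (simple j) k = p * refl_word A y (simple j) k + q * refl_word A y (simple t) k"
      using pq(3) x by (simp add: dihedral_vec_def refl_word_linear)
    moreover have "refl_word A y (simple j) k \<ge> 0" "refl_word A y (simple t) k \<ge> 0"
      using less.hyps[OF y(1) y(2)] by auto
    ultimately show ?thesis
      using pq by simp
  qed
qed

lemma root_sign_coherent:
  assumes "v \<in> roots A"
  shows "(\<forall>k. v k \<ge> 0) \<or> (\<forall>k. v k \<le> 0)"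
proof -
  obtain w i where v: "v = refl_word A w (simple i)"
    using root_obtain_word[OF assms] .
  show ?thesis
  proof (cases "len (refl_word A w) \<le> len (refl_word A (w @ [i]))")
    case True
    then show ?thesis
      using refl_word_simple_nonneg v by auto
  next
    case False
    have "refl_word A ((w @ [i]) @ [i]) = refl_word A w"
      by (simp add: refl_word_append fun_eq_iff srefl_srefl)
    with False have "refl_word A (w @ [i]) (simple i) k \<ge> 0" for k
      by (intro refl_word_simple_nonneg) simp
    moreover have "refl_word A (w @ [i]) (simple i) = neg v"
      by (simp add: refl_word_append srefl_simple_self refl_word_neg v)
    ultimately show ?thesis
      by (auto simp: neg_def)
  qed
qed

lemma root_multiple_simple:
  assumes "v \<in> roots A" "v = (\<lambda>k. c * simple j k)"
  shows "c = 1 \<or> c = -1"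
proof -
  obtain w i where v: "v = refl_word A w (simple i)"
    using root_obtain_word[OF assms(1)] .
  have "simple i = refl_word A (rev w) v"
    using v refl_word_rev_cancel[of A w] by simp
  also have "\<dots> = (\<lambda>k. c * refl_word A (rev w) (simple j) k)"
    using assms(2) refl_word_linear[of A "rev w" c "simple j" 0 "simple j"] by simp
  finally have "c * refl_word A (rev w) (simple j) i = 1"
    by (metis simple_def)
  then show ?thesis
    using zmult_eq_1_iff by blast
qed

lemma srefl_pos_root:
  assumes a: "a \<in> pos_roots A" and ne: "a \<noteq> simple j"
  shows "srefl A j a \<in> pos_roots A"
proof (rule ccontr)
  assume "srefl A j a \<notin> pos_roots A"
  moreover have root: "a \<in> roots A" "srefl A j a \<in> roots A"
    using a by (auto simp: pos_roots_def intro: roots.refl_root)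
  ultimately have "\<forall>k. srefl A j a k \<le> 0"
    using root_sign_coherent by (auto simp: pos_roots_def)
  moreover have "\<forall>k. a k \<ge> 0"
    using a by (simp add: pos_roots_def)
  ultimately have "a k = 0" if "k \<noteq> j" for k
    using that by (metis order_antisym srefl_def)
  then have "a = (\<lambda>k. a j * simple j k)"
    by (auto simp: simple_def)
  moreover from this have "a j = 1 \<or> a j = -1"
    by (rule root_multiple_simple[OF root(1)])
  with \<open>\<forall>k. a k \<ge> 0\<close> have "a j = 1"
    by (metis neg_0_le_iff_le not_one_le_zero)
  ultimately show False
    using ne by simp
qed

section \<open>The bipartite Coxeter element\<close>

lemma refl_set_eq_refl_word:
  assumes "orthogonal_set A X"
  obtains w where "refl_set A X = refl_word A w" "refl_set A X = refl_word A (rev w)"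
proof -
  obtain w where "distinct w" "set w = X"
    using finite_distinct_list[of X] by auto
  then show thesis
    using refl_word_eq_refl_set[of w A] refl_word_eq_refl_set[of "rev w" A] assms by (intro that[of w]) simp_all
qed

lemma refl_set_refl_set [simp]: "orthogonal_set A X \<Longrightarrow> refl_set A X (refl_set A X v) = v"
  by (metis refl_set_eq_refl_word refl_word_rev_cancel cartan_diag_all)

lemma refl_set_eq_iff [simp]: "orthogonal_set A X \<Longrightarrow> refl_set A X u = refl_set A X v \<longleftrightarrow> u = v"
  by (metis refl_set_refl_set)

lemma refl_set_root: "orthogonal_set A X \<Longrightarrow> v \<in> roots A \<Longrightarrow> refl_set A X v \<in> roots A"
  by (metis refl_set_eq_refl_word refl_word_root)

lemma refl_set_sum: "refl_set A X (\<lambda>c. \<Sum>k\<in>K. f k c) = (\<lambda>c. \<Sum>k\<in>K. refl_set A X (f k) c)"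
  by (auto simp: refl_set_def fun_eq_iff sum_subtractf sum_distrib_left intro: sum.swap)

lemma refl_set_neg: "refl_set A X (neg v) = neg (refl_set A X v)"
  by (auto simp: refl_set_def neg_def sum_negf)

lemma refl_set_simple_in:
  assumes "orthogonal_set A X" "i \<in> X"
  shows "refl_set A X (simple i) = neg (simple i)"
  using assms sum_mult_simple[of "\<lambda>l. A _ l" i]
  by (auto simp: refl_set_def neg_def orthogonal_set_def fun_eq_iff) (auto simp: simple_def)

lemma refl_set_pos_root:
  assumes X: "orthogonal_set A X" and a: "a \<in> pos_roots A" and ne: "\<forall>i\<in>X. a \<noteq> simple i"
  shows "refl_set A X a \<in> pos_roots A"
proof -
  have "refl_set A X a k \<ge> 0" for k
  proof (cases "k \<in> X")
    case True
    then have "srefl A k a k \<ge> 0"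
      using srefl_pos_root[OF a] ne by (simp add: pos_roots_def)
    then show ?thesis
      using True by (simp add: refl_set_def srefl_def)
  next
    case False
    then show ?thesis
      using a by (simp add: pos_roots_def)
  qed
  moreover have "refl_set A X a \<in> roots A"
    using a refl_set_root[OF X] by (simp add: pos_roots_def)
  ultimately show ?thesis
    by (simp add: pos_roots_def)
qed

lemma tau_bip_almost_pos:
  assumes X: "orthogonal_set A X" and w: "refl_word A w = refl_set A X" and a: "a \<in> almost_pos A"
  shows "tau_bip A (- X) w a \<in> almost_pos A"
proof -
  consider "a \<in> pos_roots A" | i where "a = neg (simple i)"
    using a by (auto simp: almost_pos_def)
  then show ?thesis
  proof cases
    case 1
    then have "\<not> (\<exists>i\<in>- X. a = neg (simple i))"
      using pos_root_ne_neg_simple by blast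
    then show ?thesis
      using 1 refl_set_pos_root[OF X 1] refl_set_simple_in[OF X]
      by (cases "\<exists>i\<in>X. a = simple i") (auto simp: tau_bip_def w almost_pos_def)
  next
    case 2
    then show ?thesis
      using a by (cases "i \<in> X")
        (auto simp: tau_bip_def w almost_pos_def refl_set_neg refl_set_simple_in[OF X] simple_pos_root)
  qed
qed

end

locale bipartite_cartan = cartan A for A :: "'i::finite \<Rightarrow> 'i \<Rightarrow> int" +
  fixes Ipl Imi :: "'i set" and wp wm :: "'i list"
  assumes bipartition: "is_bipartition A Ipl Imi"
    and distinct_wp: "distinct wp" and set_wp: "set wp = Ipl"
    and distinct_wm: "distinct wm" and set_wm: "set wm = Imi"
begin

abbreviation "t_plus \<equiv> refl_set A Ipl"
abbreviation "t_minus \<equiv> refl_set A Imi"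
abbreviation "tau_plus \<equiv> tau_bip A Imi wp"
abbreviation "tau_minus \<equiv> tau_bip A Ipl wm"

lemma Imi_eq: "Imi = - Ipl"
  using bipartition by (auto simp: is_bipartition_def)

lemma orthogonal_Ipl: "orthogonal_set A Ipl" and orthogonal_Imi: "orthogonal_set A Imi"
  using bipartition by (auto simp: is_bipartition_def dynkin_edges_def orthogonal_set_def)

lemma refl_word_wp: "refl_word A wp = t_plus"
  using refl_word_eq_refl_set[OF distinct_wp] orthogonal_Ipl by (simp add: set_wp)

lemma refl_word_wm: "refl_word A wm = t_minus"
  using refl_word_eq_refl_set[OF distinct_wm] orthogonal_Imi by (simp add: set_wm)

lemma refl_word_rev_wm: "refl_word A (rev wm) = t_minus"
  using refl_word_eq_refl_set[of "rev wm"] distinct_wm orthogonal_Imi by (simp add: set_wm)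

lemma refl_word_coxeter: "refl_word A (wp @ wm) = t_plus \<circ> t_minus"
  by (simp add: refl_word_append refl_word_wp refl_word_wm)

lemma beta_Ipl:
  assumes i: "i \<in> Ipl"
  shows "beta A (wp @ wm) i = t_minus (simple i)"
proof -
  obtain u v where uv: "wp = u @ i # v"
    using i set_wp split_list[of i wp] by auto
  then have iuv: "i \<notin> set u" "i \<notin> set v"
    using distinct_wp by auto
  have "beta A (wp @ wm) i = t_minus (refl_word A (rev v) (simple i))"
    using uv beta_append_at[OF iuv(1)] by (simp add: refl_word_append refl_word_rev_wm)
  also have "refl_word A (rev v) (simple i) = simple i"
    using uv set_wp iuv orthogonal_Ipl i by (intro refl_word_fixes_simple) (auto simp: orthogonal_set_def)
  finally show ?thesis .
qed

lemma beta_Imi: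
  assumes i: "i \<in> Imi"
  shows "beta A (wp @ wm) i = simple i"
proof -
  have "beta A (wp @ wm) i = beta A wm i"
    using i set_wp Imi_eq by (intro beta_append_notin) auto
  moreover obtain u v where uv: "wm = u @ i # v"
    using i set_wm split_list[of i wm] by auto
  moreover have iuv: "i \<notin> set u" "i \<notin> set v"
    using distinct_wm uv by auto
  moreover have "refl_word A (rev v) (simple i) = simple i"
    using uv set_wm iuv orthogonal_Imi i by (intro refl_word_fixes_simple) (auto simp: orthogonal_set_def)
  ultimately show ?thesis
    using beta_append_at[OF iuv(1)] by simp
qed

lemma t_minus_eq_beta_iff:
  "t_minus a = beta A (wp @ wm) j \<longleftrightarrow> (j \<in> Ipl \<and> a = simple j) \<or> (j \<in> Imi \<and> a = neg (simple j))"
proof (cases "j \<in> Ipl")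
  case True
  then show ?thesis
    using beta_Ipl orthogonal_Imi Imi_eq by auto
next
  case False
  then have "j \<in> Imi" "beta A (wp @ wm) j = t_minus (neg (simple j))"
    using beta_Imi Imi_eq orthogonal_Imi by (auto simp: refl_set_neg refl_set_simple_in)
  then show ?thesis
    using False orthogonal_Imi by simp
qed

lemma tau_c_t_minus: "tau_c A (wp @ wm) (t_minus a) = t_minus (tau_minus (tau_plus a))"
proof -
  consider (simple) j where "j \<in> Ipl" "a = simple j" | (neg_simple) j where "j \<in> Imi" "a = neg (simple j)"
    | (other) "\<forall>j\<in>Ipl. a \<noteq> simple j" "\<forall>j\<in>Imi. a \<noteq> neg (simple j)"
    by blast
  then show ?thesis
  proof cases
    case simple
    then have "tau_plus a = neg (simple j)"
      by (simp add: tau_bip_def refl_word_wp refl_set_simple_in orthogonal_Ipl)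
    then show ?thesis
      using simple t_minus_eq_beta_iff[of a j] by (auto simp: tau_c_def tau_bip_def refl_set_neg)
  next
    case neg_simple
    then have "j \<notin> Ipl"
      using Imi_eq by auto
    have tm: "t_minus a = simple j"
      using neg_simple orthogonal_Imi by (simp add: refl_set_neg refl_set_simple_in)
    have "t_minus a = beta A (wp @ wm) j"
      using t_minus_eq_beta_iff[of a j] neg_simple by simp
    then have "tau_c A (wp @ wm) (t_minus a) = neg (simple j)"
      unfolding tau_c_def tm by auto
    moreover have "tau_minus (tau_plus a) = simple j"
      using neg_simple tm \<open>j \<notin> Ipl\<close> by (auto simp: tau_bip_def refl_word_wm)
    ultimately show ?thesis
      using neg_simple orthogonal_Imi by (simp add: refl_set_simple_in)
  next
    case other
    then have "\<not> (\<exists>j. t_minus a = beta A (wp @ wm) j)"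
      using t_minus_eq_beta_iff by auto
    moreover have "\<not> (\<exists>i\<in>Ipl. t_plus a = neg (simple i))"
    proof
      assume "\<exists>i\<in>Ipl. t_plus a = neg (simple i)"
      then obtain i where "i \<in> Ipl" "a = t_plus (neg (simple i))"
        using orthogonal_Ipl by (metis refl_set_refl_set)
      then show False
        using other orthogonal_Ipl by (simp add: refl_set_neg refl_set_simple_in)
    qed
    ultimately show ?thesis
      using other orthogonal_Imi
      by (simp add: tau_c_def tau_bip_def refl_word_coxeter refl_word_wp refl_word_wm)
  qed
qed

lemma tau_plus_almost_pos: "a \<in> almost_pos A \<Longrightarrow> tau_plus a \<in> almost_pos A"
  using tau_bip_almost_pos[OF orthogonal_Ipl refl_word_wp] Imi_eq by simp

lemma tau_minus_almost_pos: "a \<in> almost_pos A \<Longrightarrow> tau_minus a \<in> almost_pos A"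
  using tau_bip_almost_pos[OF orthogonal_Imi refl_word_wm] Imi_eq by simp

lemma t_minus_ap_roots:
  assumes a: "a \<in> almost_pos A"
  shows "t_minus a \<in> ap_roots A (wp @ wm)"
proof -
  consider "a \<in> pos_roots A" "\<forall>i\<in>Imi. a \<noteq> simple i" | i where "i \<in> Imi" "a = simple i"
    | i where "i \<in> Ipl" "a = neg (simple i)" | i where "i \<in> Imi" "a = neg (simple i)"
    using a Imi_eq by (auto simp: almost_pos_def)
  then show ?thesis
  proof cases
    case 1
    then show ?thesis
      using refl_set_pos_root[OF orthogonal_Imi] by (simp add: ap_roots_def)
  next
    case (2 i)
    then have "t_minus a = neg (beta A (wp @ wm) i)"
      using beta_Imi orthogonal_Imi by (simp add: refl_set_simple_in)
    then show ?thesis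
      by (simp add: ap_roots_def)
  next
    case (3 i)
    then have "t_minus a = neg (beta A (wp @ wm) i)"
      using beta_Ipl by (simp add: refl_set_neg)
    then show ?thesis
      by (simp add: ap_roots_def)
  next
    case (4 i)
    then have "t_minus a = simple i"
      using orthogonal_Imi by (simp add: refl_set_neg refl_set_simple_in)
    then show ?thesis
      by (simp add: ap_roots_def simple_pos_root)
  qed
qed

lemma tau_pos_root:
  assumes "b \<in> pos_roots A" "\<forall>i. tau_minus (tau_plus b) \<noteq> neg (simple i)"
  shows "tau_minus (tau_plus b) = t_minus (t_plus b)"
proof -
  have "tau_plus b = t_plus b"
    using assms(1) pos_root_ne_neg_simple by (auto simp: tau_bip_def refl_word_wp)
  then show ?thesis
    using assms(2) by (auto simp: tau_bip_def refl_word_wm split: if_splits)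
qed

lemma coxeter_fixed_vector_zero:
  assumes "t_minus (t_plus z) = z"
  shows "z = (\<lambda>k. 0)"
proof (rule cartan_kernel_trivial, rule allI)
  fix k
  have "t_plus z = t_minus z"
    using arg_cong[OF assms, of t_minus] orthogonal_Imi by simp
  then have "t_plus z k = t_minus z k"
    by simp
  then show "(\<Sum>l\<in>UNIV. A k l * z l) = 0"
    using Imi_eq by (cases "k \<in> Ipl") (auto simp: refl_set_def)
qed

lemma coxeter_orbit_sum_fixed:
  assumes "((t_minus \<circ> t_plus) ^^ p) a = a"
  defines "z \<equiv> (\<lambda>c. \<Sum>k<p. ((t_minus \<circ> t_plus) ^^ k) a c)"
  shows "t_minus (t_plus z) = z"
proof -
  let ?cox = "t_minus \<circ> t_plus"
  have "t_minus (t_plus z) = (\<lambda>c. \<Sum>k<p. (?cox ^^ Suc k) a c)"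
    by (simp add: z_def refl_set_sum)
  also have "\<dots> = z"
  proof (rule ext)
    fix c
    have "(\<Sum>k<Suc p. (?cox ^^ k) a c) = (?cox ^^ 0) a c + (\<Sum>k<p. (?cox ^^ Suc k) a c)"
      by (rule sum.lessThan_Suc_shift)
    moreover have "(\<Sum>k<Suc p. (?cox ^^ k) a c) = z c + (?cox ^^ p) a c"
      by (simp add: z_def)
    ultimately show "(\<Sum>k<p. (?cox ^^ Suc k) a c) = z c"
      using assms(1) by simp
  qed
  finally show ?thesis .
qed

lemma orbit_reaches_neg_simple:
  assumes a: "a \<in> almost_pos A"
  shows "\<exists>k i. ((tau_minus \<circ> tau_plus) ^^ k) a = neg (simple i)"
proof (rule ccontr)
  define cox where "cox = t_minus \<circ> t_plus"
  assume none: "\<not> ?thesis"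
  have "((tau_minus \<circ> tau_plus) ^^ k) a \<in> almost_pos A" for k
    by (induction k) (simp_all add: a tau_plus_almost_pos tau_minus_almost_pos)
  with none have pos: "((tau_minus \<circ> tau_plus) ^^ k) a \<in> pos_roots A" for k
    unfolding almost_pos_def by blast
  have iter: "((tau_minus \<circ> tau_plus) ^^ k) a = (cox ^^ k) a" for k
  proof (induction k)
    case (Suc k)
    define b where "b = ((tau_minus \<circ> tau_plus) ^^ k) a"
    have "\<forall>i. tau_minus (tau_plus b) \<noteq> neg (simple i)"
      using none by (metis b_def comp_apply funpow.simps(2))
    then have "((tau_minus \<circ> tau_plus) ^^ Suc k) a = t_minus (t_plus b)"
      using tau_pos_root[OF pos[of k]] by (simp add: b_def)
    then show ?case
      using Suc.IH by (simp add: b_def cox_def)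
  qed simp
  have "inj cox"
    using orthogonal_Ipl orthogonal_Imi by (auto simp: cox_def intro: injI)
  moreover have "finite {y. \<exists>n. y = (cox ^^ n) a}"
    using pos iter finite_roots by (auto simp: pos_roots_def intro: finite_subset[of _ "roots A"])
  ultimately obtain p where p: "p > 0" "(cox ^^ p) a = a"
    using funpow_inj_finite by metis
  define z where "z = (\<lambda>c. \<Sum>k<p. (cox ^^ k) a c)"
  have z0: "z = (\<lambda>k. 0)"
    using coxeter_fixed_vector_zero coxeter_orbit_sum_fixed p(2) by (simp add: z_def cox_def)
  have "a \<noteq> (\<lambda>k. 0)"
    using pos[of 0] root_nonzero[of A, OF cartan_diag_all] by (simp add: pos_roots_def)
  then obtain c where "a c > 0"
    using pos[of 0] by (auto simp: pos_roots_def order_less_le)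
  moreover have "(cox ^^ 0) a c \<le> z c"
    unfolding z_def by (rule member_le_sum) (use p(1) pos iter in \<open>auto simp: pos_roots_def\<close>)
  ultimately show False
    using z0 by simp
qed

lemma tau_c_t_minus_coord:
  assumes i: "i \<in> Imi" and c: "c \<in> almost_pos A"
  shows "max (tau_c A (wp @ wm) (t_minus c) i) 0 = max (c i) 0"
proof -
  consider (simple) j where "j \<in> Ipl" "c = simple j" | (neg_simple) j where "j \<in> Imi" "c = neg (simple j)"
    | (other) "\<not> (\<exists>j. t_minus c = beta A (wp @ wm) j)"
    using t_minus_eq_beta_iff by blast
  then show ?thesis
  proof cases
    case simple
    then have "i \<noteq> j"
      using i Imi_eq by auto
    have "tau_c A (wp @ wm) (t_minus c) = neg (t_minus (simple j))"
      using simple t_minus_eq_beta_iff[of c j] by (auto simp: tau_c_def)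
    then have "tau_c A (wp @ wm) (t_minus c) i = A i j"
      using i \<open>i \<noteq> j\<close> sum_mult_simple[of "A i" j] by (simp add: neg_def refl_set_def simple_def)
    then show ?thesis
      using simple cartan_offdiag[OF \<open>i \<noteq> j\<close>] \<open>i \<noteq> j\<close> by (simp add: simple_def)
  next
    case neg_simple
    then have "\<exists>j'. t_minus c = beta A (wp @ wm) j'"
      using t_minus_eq_beta_iff by blast
    then have "tau_c A (wp @ wm) (t_minus c) = neg (t_minus c)"
      by (simp add: tau_c_def)
    then have "tau_c A (wp @ wm) (t_minus c) = c"
      using neg_simple orthogonal_Imi by (simp add: refl_set_neg refl_set_simple_in)
    then show ?thesis
      by simp
  next
    case other
    then have "tau_c A (wp @ wm) (t_minus c) = t_plus c"
      using orthogonal_Imi by (simp add: tau_c_def refl_word_coxeter)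
    then show ?thesis
      using i Imi_eq by simp
  qed
qed

context
  fixes f g :: "('i \<Rightarrow> int) \<Rightarrow> ('i \<Rightarrow> int) \<Rightarrow> int"
  assumes f: "is_compat_ge A Ipl Imi wp wm f" and g: "is_compat_c A (wp @ wm) g"
begin

lemma compat_ge_tau_invariant:
  assumes "a \<in> almost_pos A" "c \<in> almost_pos A"
  shows "f (tau_minus (tau_plus a)) (tau_minus (tau_plus c)) = f a c"
  using f assms tau_plus_almost_pos by (simp add: is_compat_ge_def)

lemma compat_c_tau_invariant:
  assumes "a \<in> almost_pos A" "c \<in> almost_pos A"
  shows "g (t_minus (tau_minus (tau_plus a))) (t_minus (tau_minus (tau_plus c))) = g (t_minus a) (t_minus c)"
  using g assms t_minus_ap_roots by (simp add: is_compat_c_def tau_c_t_minus[symmetric])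

lemma compat_c_neg_simple:
  assumes c: "c \<in> almost_pos A"
  shows "g (t_minus (neg (simple i))) (t_minus c) = max (c i) 0"
proof (cases "i \<in> Ipl")
  case True
  then have "t_minus (neg (simple i)) = neg (beta A (wp @ wm) i)"
    by (simp add: beta_Ipl refl_set_neg)
  moreover have "t_minus c i = c i"
    using True Imi_eq by simp
  ultimately show ?thesis
    using g t_minus_ap_roots[OF c] by (simp add: is_compat_c_def)
next
  case False
  then have i: "i \<in> Imi"
    using Imi_eq by simp
  have simple_ap: "simple i \<in> ap_roots A (wp @ wm)"
    by (simp add: ap_roots_def simple_pos_root)
  have "\<exists>i'. simple i = beta A (wp @ wm) i'"
    using beta_Imi[OF i] by metis
  then have "tau_c A (wp @ wm) (simple i) = neg (beta A (wp @ wm) i)"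
    using beta_Imi[OF i] by (simp add: tau_c_def)
  moreover have "t_minus (neg (simple i)) = simple i"
    using i orthogonal_Imi by (simp add: refl_set_neg refl_set_simple_in)
  moreover have "tau_c A (wp @ wm) (t_minus c) \<in> ap_roots A (wp @ wm)"
    using c tau_c_t_minus t_minus_ap_roots tau_plus_almost_pos tau_minus_almost_pos by simp
  ultimately have "g (t_minus (neg (simple i))) (t_minus c) = max (tau_c A (wp @ wm) (t_minus c) i) 0"
    using g simple_ap t_minus_ap_roots[OF c] unfolding is_compat_c_def by metis
  then show ?thesis
    using tau_c_t_minus_coord[OF i c] by simp
qed

lemma compat_eq:
  assumes a: "a \<in> almost_pos A" and c: "c \<in> almost_pos A"
  shows "f a c = g (t_minus a) (t_minus c)"
proof -
  obtain k i where k: "((tau_minus \<circ> tau_plus) ^^ k) a = neg (simple i)"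
    using orbit_reaches_neg_simple[OF a] by blast
  have "f b c = g (t_minus b) (t_minus c)"
    if "b \<in> almost_pos A" "((tau_minus \<circ> tau_plus) ^^ k) b = neg (simple i)" for b
    using that c
  proof (induction k arbitrary: b c)
    case 0
    then show ?case
      using f compat_c_neg_simple by (simp add: is_compat_ge_def)
  next
    case (Suc k)
    let ?next = "\<lambda>x. tau_minus (tau_plus x)"
    have "f b c = f (?next b) (?next c)"
      using compat_ge_tau_invariant Suc.prems by simp
    also have "\<dots> = g (t_minus (?next b)) (t_minus (?next c))"
      using Suc tau_plus_almost_pos tau_minus_almost_pos by (simp add: funpow_Suc_right del: funpow.simps)
    also have "\<dots> = g (t_minus b) (t_minus c)"
      using compat_c_tau_invariant Suc.prems by simp
    finally show ?case .
  qed
  then show ?thesis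
    using a k by blast
qed

end

end

theorem proposition4p4:
  fixes A :: "'i::finite \<Rightarrow> 'i \<Rightarrow> int" and Ipl Imi :: "'i set" and wp wm :: "'i list"
  assumes "finite_type_cartan A" and "connected_diagram A" and "is_bipartition A Ipl Imi"
    and "distinct wp" and "set wp = Ipl" and "distinct wm" and "set wm = Imi"
  shows "(\<forall>a\<in>almost_pos A.
            tau_c A (wp @ wm) (refl_word A wm a) = refl_word A wm (tau_bip A Ipl wm (tau_bip A Imi wp a)))
       \<and> (\<forall>f g. is_compat_ge A Ipl Imi wp wm f \<longrightarrow> is_compat_c A (wp @ wm) g \<longrightarrow>
            (\<forall>a\<in>almost_pos A. \<forall>c\<in>almost_pos A. f a c = g (refl_word A wm a) (refl_word A wm c)))"
proof -
  interpret bipartite_cartan A Ipl Imi wp wm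
    using assms by unfold_locales simp_all
  show ?thesis
    using tau_c_t_minus compat_eq by (simp add: refl_word_wm)
qed

end
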